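(* Let $\Gamma=\langle x,y,z\mid x^2=y^2=z^2=e,\ xy^{-1}=yx^{-1},\ xz^{-1}=zx^{-1},\ yz^{-1}=zy^{-1}\rangle$ (so that $\Gamma\cong(\mathbb{Z}/2)^3$ and $C_\Delta(\Gamma)$ is the hypercube of dimension 3), with $\Delta=\{x,y,z\}$. There is no homogeneous scalar quantum walk on $C_\Delta(\Gamma)$.
   Context: The Cayley graph $C_\Delta(\Gamma)$ has vertex set $\Gamma$ and directed edges $(g,g\delta)$, $g\in\Gamma,\delta\in\Delta$. Let $\ell^2(\Gamma)$ have orthonormal basis $\{|g\rangle\}_{g\in\Gamma}$ and for $\delta\in\Gamma$ let $U_\delta|g\rangle=|g\delta\rangle$. A homogeneous scalar quantum walk on $C_\Delta(\Gamma)$ is a unitary operator $W=\sum_{\delta\in\Delta}W_\delta U_\delta$ with all complex coefficients $W_\delta$ nonzero. *)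

theory Defs
  imports Complex_Main
begin

text \<open>The group Gamma = (Z/2)^3, realised on bool x bool x bool with componentwise
  exclusive or as the group operation; identity (False,False,False).\<close>

type_synonym cube = "bool \<times> bool \<times> bool"

definition cmul :: "cube \<Rightarrow> cube \<Rightarrow> cube" where
  "cmul g h = (fst g \<noteq> fst h, fst (snd g) \<noteq> fst (snd h), snd (snd g) \<noteq> snd (snd h))"

definition cinv :: "cube \<Rightarrow> cube" where
  "cinv g = g"

definition gx :: cube where "gx = (True, False, False)"
definition gy :: cube where "gy = (False, True, False)"
definition gz :: cube where "gz = (False, False, True)"

text \<open>Vectors of l2(Gamma) are functions Gamma \<Rightarrow> complex (Gamma is finite).
  U_delta |g> = |g delta>, hence (U_delta f)(h) = f(h delta^-1).\<close>

definition shiftU :: "cube \<Rightarrow> (cube \<Rightarrow> complex) \<Rightarrow> (cube \<Rightarrow> complex)" where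
  "shiftU \<delta> f = (\<lambda>h. f (cmul h (cinv \<delta>)))"

definition l2inner :: "(cube \<Rightarrow> complex) \<Rightarrow> (cube \<Rightarrow> complex) \<Rightarrow> complex" where
  "l2inner f g = (\<Sum>h\<in>UNIV. cnj (f h) * g h)"

definition walk_op :: "cube set \<Rightarrow> (cube \<Rightarrow> complex) \<Rightarrow> (cube \<Rightarrow> complex) \<Rightarrow> (cube \<Rightarrow> complex)" where
  "walk_op \<Delta> W f = (\<lambda>h. \<Sum>\<delta>\<in>\<Delta>. W \<delta> * shiftU \<delta> f h)"

definition unitary_op :: "((cube \<Rightarrow> complex) \<Rightarrow> (cube \<Rightarrow> complex)) \<Rightarrow> bool" where
  "unitary_op T \<longleftrightarrow> (\<forall>f g. l2inner (T f) (T g) = l2inner f g) \<and> surj T"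

definition homogeneous_scalar_qw :: "cube set \<Rightarrow> (cube \<Rightarrow> complex) \<Rightarrow> bool" where
  "homogeneous_scalar_qw \<Delta> W \<longleftrightarrow> (\<forall>\<delta>\<in>\<Delta>. W \<delta> \<noteq> 0) \<and> unitary_op (walk_op \<Delta> W)"

end

theory Submission
  imports Defs
begin

(* Unitarity keeps the images W|x>, W|y>, W|z> of the basis vectors orthogonal. The supports
   of W|\<delta>> and W|\<delta>'> meet only in e and \<delta>\<delta>', so this orthogonality reads
   2 Re (cnj W_\<delta> * W_\<delta>') = 0. Hence W_x, W_y, W_z would be three nonzero, pairwise
   orthogonal vectors of the real plane \<complex>. *)

lemma no_three_nonzero_orthogonal_complex:
  fixes a b c :: complex
  assumes "a \<noteq> 0" "b \<noteq> 0" "c \<noteq> 0"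
    and "Re (a * cnj b) = 0" "Re (a * cnj c) = 0" "Re (b * cnj c) = 0"
  shows False
proof -
  define u v where "u = b / a" and "v = c / a"
  have "Re u = 0" "Re v = 0"
    using assms(4,5) by (simp_all add: u_def v_def Re_complex_div_eq_0 mult.commute)
  moreover have "u \<noteq> 0" "v \<noteq> 0"
    using assms(1-3) by (simp_all add: u_def v_def)
  ultimately have "Re (u * cnj v) \<noteq> 0"
    by (simp add: complex_eq_iff)
  moreover have "b * cnj c = of_real ((cmod a)\<^sup>2) * (u * cnj v)"
    using assms(1) by (simp add: u_def v_def complex_norm_square field_simps del: of_real_power)
  ultimately show False
    using assms(1,6) by simp
qed

definition ket :: "cube \<Rightarrow> cube \<Rightarrow> complex" where
  "ket g = (\<lambda>h. if h = g then 1 else 0)"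

lemma l2inner_ket_ket: "l2inner (ket g) (ket k) = (if g = k then 1 else 0)"
  by (simp add: l2inner_def ket_def if_distrib [of cnj] if_distrib [of "\<lambda>z. z * _"] cong: if_cong)

lemma unitary_op_ket_orthogonal:
  assumes "unitary_op T" and "g \<noteq> k"
  shows "l2inner (T (ket g)) (T (ket k)) = 0"
  using assms by (simp add: unitary_op_def l2inner_ket_ket)

lemma cmul_eq_iff: "cmul h \<delta> = g \<longleftrightarrow> \<delta> = cmul g h"
  by (auto simp: cmul_def prod_eq_iff)

lemma walk_op_ket: "walk_op \<Delta> W (ket g) = (\<lambda>h. if cmul g h \<in> \<Delta> then W (cmul g h) else 0)"
  by (simp add: walk_op_def shiftU_def cinv_def ket_def cmul_eq_iff if_distrib [of "\<lambda>z. _ * z"]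
      cong: if_cong)

lemma sum_UNIV_cube: "(\<Sum>h\<in>(UNIV::cube set). f h) =
  f (False,False,False) + f (False,False,True) + f (False,True,False) + f (False,True,True) +
  f (True,False,False) + f (True,False,True) + f (True,True,False) + f (True,True,True)"
  by (simp add: UNIV_Times_UNIV [symmetric] sum.cartesian_product [symmetric] UNIV_bool
      algebra_simps del: UNIV_Times_UNIV)

lemma l2inner_walk_op_ket_generators:
  assumes "\<delta> \<in> {gx, gy, gz}" "\<delta>' \<in> {gx, gy, gz}" "\<delta> \<noteq> \<delta>'"
  shows "l2inner (walk_op {gx, gy, gz} W (ket \<delta>)) (walk_op {gx, gy, gz} W (ket \<delta>')) =
    cnj (W \<delta>) * W \<delta>' + cnj (W \<delta>') * W \<delta>"
  using assms unfolding gx_def gy_def gz_def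
  by (elim insertE emptyE; simp add: l2inner_def walk_op_ket sum_UNIV_cube cmul_def algebra_simps)

lemma unitary_walk_op_coefficients_orthogonal:
  assumes "unitary_op (walk_op {gx, gy, gz} W)"
    and "\<delta> \<in> {gx, gy, gz}" "\<delta>' \<in> {gx, gy, gz}" "\<delta> \<noteq> \<delta>'"
  shows "Re (W \<delta>' * cnj (W \<delta>)) = 0"
proof -
  have "W \<delta>' * cnj (W \<delta>) + cnj (W \<delta>') * W \<delta> = 0"
    using unitary_op_ket_orthogonal [OF assms(1,4)] l2inner_walk_op_ket_generators [OF assms(2-4)]
    by (simp add: mult.commute)
  then have "complex_of_real (2 * Re (W \<delta>' * cnj (W \<delta>))) = 0"
    by (simp only: cnj_add_mult_eq_Re)
  then show ?thesis
    by (simp only: of_real_eq_0_iff)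
qed

theorem mainTheorem7:
  shows "\<not> (\<exists>W. homogeneous_scalar_qw {gx, gy, gz} W)"
proof
  assume "\<exists>W. homogeneous_scalar_qw {gx, gy, gz} W"
  then obtain W where nonzero: "\<forall>\<delta>\<in>{gx, gy, gz}. W \<delta> \<noteq> 0"
    and unitary: "unitary_op (walk_op {gx, gy, gz} W)"
    unfolding homogeneous_scalar_qw_def by blast
  have "Re (W gx * cnj (W gy)) = 0" "Re (W gx * cnj (W gz)) = 0" "Re (W gy * cnj (W gz)) = 0"
    by (rule unitary_walk_op_coefficients_orthogonal [OF unitary]; simp add: gx_def gy_def gz_def)+
  with nonzero show False
    using no_three_nonzero_orthogonal_complex [of "W gx" "W gy" "W gz"] by simp
qed

end
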